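(* For every $k\ge1$, the set $G_k$ is a subgroup of $B_k$.
   Context: Let $C_2=\{e,\sigma\}$ with $\sigma=(1,2)$. Define $B_1=C_2$ and $B_k=B_{k-1}\wr C_2$ for $k>1$, with elements written as wreath recursions $(g_1,g_2)\pi$, $g_1,g_2\in B_{k-1}$, $\pi\in C_2$, and multiplication $(g_1,g_2)\pi\cdot(h_1,h_2)\rho=(g_1h_{\pi(1)},g_2h_{\pi(2)})\pi\rho$. Define $G_1=\{e\}$ and, for $k>1$, $G_k=\{(g_1,g_2)\pi\in B_k : g_1g_2\in G_{k-1}\}$. *)

theory Defs
  imports "HOL-Algebra.Group"
begin

text \<open>A permutation of C_2 = {e, sigma}
  is encoded by a boolean: False = e, True = sigma = (1,2).
  An element of B_1 = C_2 is  CLeaf p ; an element (g1,g2)pi of B_k (k > 1) is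
  WNode g1 g2 pi with g1, g2 in B_(k-1).\<close>

datatype wr = CLeaf bool | WNode wr wr bool

fun inB :: "nat \<Rightarrow> wr \<Rightarrow> bool" where
  "inB 0 g = False"
| "inB (Suc 0) g = (case g of CLeaf p \<Rightarrow> True | WNode _ _ _ \<Rightarrow> False)"
| "inB (Suc (Suc k)) g = (case g of CLeaf _ \<Rightarrow> False
      | WNode g1 g2 p \<Rightarrow> inB (Suc k) g1 \<and> inB (Suc k) g2)"

definition perm_app :: "bool \<Rightarrow> nat \<Rightarrow> nat" where
  "perm_app p i = (if p then (if i = 1 then 2 else 1) else i)"

text \<open>Multiplication: (g1,g2)pi * (h1,h2)rho = (g1 h_pi(1), g2 h_pi(2)) pi rho;
  in C_2, composition of permutations is xor of the booleans.\<close>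
fun wmult :: "wr \<Rightarrow> wr \<Rightarrow> wr" where
  "wmult (CLeaf p) (CLeaf q) = CLeaf (p \<noteq> q)"
| "wmult (WNode g1 g2 p) (WNode h1 h2 q) =
     WNode (wmult g1 (if perm_app p 1 = 1 then h1 else h2))
           (wmult g2 (if perm_app p 2 = 1 then h1 else h2))
           (p \<noteq> q)"
| "wmult _ _ = undefined"

fun wone :: "nat \<Rightarrow> wr" where
  "wone 0 = CLeaf False"
| "wone (Suc 0) = CLeaf False"
| "wone (Suc (Suc k)) = WNode (wone (Suc k)) (wone (Suc k)) False"

definition B :: "nat \<Rightarrow> wr monoid" where
  "B k = \<lparr> carrier = {g. inB k g}, mult = wmult, one = wone k \<rparr>"

fun Gset :: "nat \<Rightarrow> wr set" where
  "Gset 0 = {}"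
| "Gset (Suc 0) = {wone 1}"
| "Gset (Suc (Suc k)) = {g. inB (Suc (Suc k)) g \<and>
      (case g of WNode g1 g2 p \<Rightarrow> wmult g1 g2 \<in> Gset (Suc k) | CLeaf _ \<Rightarrow> False)}"

end

theory Submission
  imports Defs "HOL-Algebra.Coset"
begin

text \<open>Each B_k is a group (associativity, identity and inverses are checked by structural
  induction on the wreath recursion), and G_k is the kernel of the parity homomorphism
  B_k \<rightarrow> C_2 that sends a leaf to its permutation and (g1,g2)\<pi> to the product of the
  parities of g1 and g2: indeed g1 g2 \<in> G_(k-1) says exactly that the parities of g1 and g2
  agree.  Kernels of homomorphisms are subgroups.\<close>

lemma inB_CLeaf_iff [simp]: "inB k (CLeaf p) \<longleftrightarrow> k = 1"
  by (cases "(k, CLeaf p)" rule: inB.cases) auto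

lemma inB_WNode_iff [simp]:
  "inB k (WNode g1 g2 p) \<longleftrightarrow> (\<exists>k'. k = Suc k' \<and> 1 \<le> k' \<and> inB k' g1 \<and> inB k' g2)"
  by (cases "(k, WNode g1 g2 p)" rule: inB.cases) auto

lemma inB_Suc_0_iff: "inB (Suc 0) g \<longleftrightarrow> (\<exists>p. g = CLeaf p)"
  by (cases g) auto

lemma wone_Suc: "1 \<le> k \<Longrightarrow> wone (Suc k) = WNode (wone k) (wone k) False"
  by (cases k) auto

lemmas wr_simps = perm_app_def wone_Suc

fun winv :: "wr \<Rightarrow> wr" where
  "winv (CLeaf p) = CLeaf p"
| "winv (WNode g1 g2 p) = WNode (winv (if p then g2 else g1)) (winv (if p then g1 else g2)) p"

fun wparity :: "wr \<Rightarrow> bool" where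
  "wparity (CLeaf p) = p"
| "wparity (WNode g1 g2 p) = (wparity g1 \<noteq> wparity g2)"

lemma inB_wmult: "inB k g \<Longrightarrow> inB k h \<Longrightarrow> inB k (wmult g h)"
proof (induction g arbitrary: k h)
  case (CLeaf p)
  then show ?case by (cases h) (auto simp: wr_simps)
next
  case (WNode g1 g2 p)
  then show ?case by (cases h) (auto simp: wr_simps)
qed

lemma wmult_assoc:
  "inB k f \<Longrightarrow> inB k g \<Longrightarrow> inB k h \<Longrightarrow> wmult (wmult f g) h = wmult f (wmult g h)"
proof (induction f arbitrary: k g h)
  case (CLeaf p)
  then show ?case by (cases g; cases h) (auto simp: wr_simps)
next
  case (WNode f1 f2 p)
  then show ?case by (cases g; cases h) (auto simp: wr_simps inB_wmult)
qed

lemma inB_wone: "1 \<le> k \<Longrightarrow> inB k (wone k)"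
  by (induction k rule: wone.induct) auto

lemma wone_wmult: "inB k g \<Longrightarrow> wmult (wone k) g = g"
  by (induction g arbitrary: k) (auto simp: wr_simps)

lemma inB_winv: "inB k g \<Longrightarrow> inB k (winv g)"
  by (induction g arbitrary: k) (auto simp: wr_simps)

lemma wmult_winv: "inB k g \<Longrightarrow> wmult (winv g) g = wone k"
  by (induction g arbitrary: k) (auto simp: wr_simps)

lemma group_B: "1 \<le> k \<Longrightarrow> group (B k)"
  by (rule groupI)
    (auto simp: B_def inB_wmult wmult_assoc inB_wone wone_wmult intro: inB_winv wmult_winv)

definition xor_group :: "bool monoid" where
  "xor_group = \<lparr>carrier = UNIV, mult = (\<noteq>), one = False\<rparr>"

lemma group_xor_group: "group xor_group"
  by (rule groupI) (auto simp: xor_group_def)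

lemma wparity_wmult: "inB k g \<Longrightarrow> inB k h \<Longrightarrow> wparity (wmult g h) = (wparity g \<noteq> wparity h)"
proof (induction g arbitrary: k h)
  case (CLeaf p)
  then show ?case by (cases h) (auto simp: wr_simps)
next
  case (WNode g1 g2 p)
  then show ?case by (cases h) (auto simp: wr_simps)
qed

lemma wparity_hom: "wparity \<in> hom (B k) xor_group"
  by (rule homI) (auto simp: B_def xor_group_def wparity_wmult)

lemma Gset_eq_kernel: "1 \<le> k \<Longrightarrow> Gset k = kernel (B k) xor_group wparity"
proof (induction k rule: nat_induct_at_least)
  case base
  show ?case by (auto simp: kernel_def B_def xor_group_def inB_Suc_0_iff simp del: inB.simps)
next
  case (Suc k)
  then obtain m where "k = Suc m" by (cases k) auto
  with Suc show ?case
    by (auto simp: kernel_def B_def xor_group_def inB_wmult wparity_wmult split: wr.splits)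
qed

theorem mainTheorem10:
  fixes k :: nat
  assumes "k \<ge> 1"
  shows "group (B k) \<and> subgroup (Gset k) (B k)"
proof
  show "group (B k)" using group_B assms .
  then have "group_hom (B k) xor_group wparity"
    by (intro group_hom.intro group_hom_axioms.intro group_xor_group wparity_hom)
  then show "subgroup (Gset k) (B k)"
    using Gset_eq_kernel assms by (simp add: group_hom.subgroup_kernel)
qed

end
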